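(* For any $i$, the set $B_\rho\cap([x_{i-1},x_i]\times[0,|Q|])$ consists of $O(m)$ axis-parallel rectangles whose vertical boundaries lie on the vertical lines $\Lambda_{i-1}=\{x_{i-1}\}\times[0,|Q|]$ and $\Lambda_i=\{x_i\}\times[0,|Q|]$.
   Context: Semi-discrete setting: $P$ and $Q$ are polygonal curves in $\mathbb{R}^d$ with $n$ and $m$ vertices, $\rho\in\mathbb{R}$. Let $Q(y)$ denote the point of $Q$ at arc length $y\in[0,|Q|]$. Let $x_i$ be the arc length of $P$ up to its $i$-th vertex. The hiker moves discretely along $P$: during each time interval $[x_{i-1},x_i]$ it stands at a single fixed vertex of $P$; let $h(x)$ denote its position at time $x\in[0,|P|]$. The Barkable Space Diagram is $[0,|P|]\times[0,|Q|]$, with $\mathrm{BSD}[x,y]=\theta_\rho(h(x),Q(y))$, where $\theta_\rho(p,q)=1$ if the Euclidean distance exceeds $\rho$ and $0$ otherwise. The obstacle set is $B_\rho=\{(x,y):\mathrm{BSD}[x,y]=1\}$. *)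

theory Defs
  imports "HOL-Analysis.Analysis"
begin

text \<open>A polygonal curve is given by its list of vertices (0-indexed).
  arc_len vs k is the arc length of the curve up to its k-th vertex.\<close>

definition arc_len :: "'a::euclidean_space list \<Rightarrow> nat \<Rightarrow> real" where
  "arc_len vs k = (\<Sum>j<k. dist (vs ! j) (vs ! Suc j))"

definition curve_len :: "'a::euclidean_space list \<Rightarrow> real" where
  "curve_len vs = arc_len vs (length vs - 1)"

text \<open>The point of the curve at arc length y (for y in [0, curve_len vs]).
  Degenerate (zero-length) edges are skipped.\<close>

definition point_at :: "'a::euclidean_space list \<Rightarrow> real \<Rightarrow> 'a" where
  "point_at vs y =
     (if \<exists>k. Suc k < length vs \<and> arc_len vs k \<le> y \<and> y \<le> arc_len vs (Suc k)
              \<and> dist (vs ! k) (vs ! Suc k) > 0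
      then (let k = (LEAST k. Suc k < length vs \<and> arc_len vs k \<le> y \<and> y \<le> arc_len vs (Suc k)
                            \<and> dist (vs ! k) (vs ! Suc k) > 0)
            in vs ! k + ((y - arc_len vs k) / dist (vs ! k) (vs ! Suc k)) *\<^sub>R (vs ! Suc k - vs ! k))
      else vs ! 0)"

definition theta :: "real \<Rightarrow> 'a::euclidean_space \<Rightarrow> 'a \<Rightarrow> nat" where
  "theta \<rho> p q = (if dist p q > \<rho> then 1 else 0)"

text \<open>Barkable space diagram for hiker position function h (time = arc length along P)
  and curve Q given by vertex list qs.\<close>

definition BSD :: "(real \<Rightarrow> 'a::euclidean_space) \<Rightarrow> 'a list \<Rightarrow> real \<Rightarrow> real \<Rightarrow> real \<Rightarrow> nat" where
  "BSD h qs \<rho> x y = theta \<rho> (h x) (point_at qs y)"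

definition obstacle_set :: "'a::euclidean_space list \<Rightarrow> (real \<Rightarrow> 'a) \<Rightarrow> 'a list \<Rightarrow> real \<Rightarrow> (real \<times> real) set" where
  "obstacle_set ps h qs \<rho> =
     {(x, y). x \<in> {0..curve_len ps} \<and> y \<in> {0..curve_len qs} \<and> BSD h qs \<rho> x y = 1}"

end

theory Submission imports Defs begin

text \<open>On the strip the hiker stands at a single vertex v, so the obstacle set there is the strip
  times Y = {y. \<rho> < dist v (Q y)}. Along an edge of Q the point Q y is an affine function of y,
  so the parameters within distance \<rho> of v form an interval and the rest of the edge contributes
  at most two intervals to Y. One more interval accounts for the parameters covered by no
  nondegenerate edge, where point_at falls back to the first vertex; these lie in {0}. Thus Y is
  covered by at most 2m intervals, hence has at most 2m connected components, and the rectangles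
  are the strip times these components.\<close>

lemma card_components_le_interval_cover:
  fixes F :: "real set set"
  assumes "finite F" and "\<And>I. I \<in> F \<Longrightarrow> is_interval I"
  shows "finite (components (\<Union>F)) \<and> card (components (\<Union>F)) \<le> card F"
proof -
  have "\<exists>I\<in>F. I \<noteq> {} \<and> I \<subseteq> c" if c: "c \<in> components (\<Union>F)" for c
  proof -
    obtain x where x: "x \<in> c" using in_components_nonempty[OF c] by blast
    then obtain I where I: "I \<in> F" "x \<in> I" using in_components_subset[OF c] by blast
    have "I \<subseteq> c"
      by (rule components_maximal[OF c]) (use I x assms(2) is_interval_connected_1 in auto)
    with I show ?thesis by blast
  qed
  then obtain g where g: "\<And>c. c \<in> components (\<Union>F) \<Longrightarrow> g c \<in> F \<and> g c \<noteq> {} \<and> g c \<subseteq> c"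
    by metis
  have inj: "inj_on g (components (\<Union>F))"
  proof (rule inj_onI)
    fix c d assume cd: "c \<in> components (\<Union>F)" "d \<in> components (\<Union>F)" "g c = g d"
    with g have "c \<inter> d \<noteq> {}" by blast
    with cd show "c = d" using components_nonoverlap by blast
  qed
  have image: "g ` components (\<Union>F) \<subseteq> F" using g by blast
  show ?thesis
    using finite_imageD[OF finite_subset[OF image assms(1)] inj] card_inj_on_le[OF inj image assms(1)]
    by blast
qed

lemma is_interval_Diff_split:
  fixes A K :: "real set"
  assumes "is_interval A" and "is_interval K"
  shows "\<exists>I J. is_interval I \<and> is_interval J \<and> A - K = I \<union> J"
proof (intro exI conjI)
  let ?I = "A \<inter> {y. \<forall>c\<in>K. y < c}" and ?J = "A \<inter> {y. \<forall>c\<in>K. c < y}"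
  have "is_interval {y::real. \<forall>c\<in>K. y < c}" "is_interval {y::real. \<forall>c\<in>K. c < y}"
    unfolding is_interval_1 by (auto intro: le_less_trans less_le_trans)
  with assms(1) show "is_interval ?I" "is_interval ?J" by (simp_all add: is_interval_Int)
  have "y \<in> ?I \<union> ?J" if "y \<in> A" "y \<notin> K" for y
  proof (rule ccontr)
    assume "y \<notin> ?I \<union> ?J"
    then obtain c d where "c \<in> K" "d \<in> K" "c \<le> y" "y \<le> d" using \<open>y \<in> A\<close> by (auto simp: not_less)
    then show False using assms(2) \<open>y \<notin> K\<close> unfolding is_interval_1 by blast
  qed
  then show "A - K = ?I \<union> ?J" by auto
qed

lemma is_interval_affine_line_vimage:
  fixes p w :: "'a::real_vector"
  assumes "convex S"
  shows "is_interval {t::real. p + ((t - a) / d) *\<^sub>R w \<in> S}"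
  unfolding is_interval_convex_1
proof (rule convexI)
  fix x y u v :: real
  assume x: "x \<in> {t. p + ((t - a) / d) *\<^sub>R w \<in> S}" and y: "y \<in> {t. p + ((t - a) / d) *\<^sub>R w \<in> S}"
    and uv: "0 \<le> u" "0 \<le> v" "u + v = 1"
  then have v: "v = 1 - u" by simp
  have "p + ((u *\<^sub>R x + v *\<^sub>R y - a) / d) *\<^sub>R w
      = u *\<^sub>R (p + ((x - a) / d) *\<^sub>R w) + v *\<^sub>R (p + ((y - a) / d) *\<^sub>R w)"
    unfolding v by (simp add: algebra_simps diff_divide_distrib add_divide_distrib)
  also have "\<dots> \<in> S" using convexD[OF assms] x y uv by simp
  finally show "u *\<^sub>R x + v *\<^sub>R y \<in> {t. p + ((t - a) / d) *\<^sub>R w \<in> S}" by simp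
qed

lemma arc_len_Suc: "arc_len vs (Suc k) = arc_len vs k + dist (vs ! k) (vs ! Suc k)"
  by (simp add: arc_len_def)

lemma arc_len_nonneg: "0 \<le> arc_len vs k"
  by (simp add: arc_len_def sum_nonneg)

lemma arc_len_mono: "j \<le> k \<Longrightarrow> arc_len vs j \<le> arc_len vs k"
  unfolding arc_len_def by (rule sum_mono2) auto

definition on_edge :: "'a::euclidean_space list \<Rightarrow> real \<Rightarrow> nat \<Rightarrow> bool" where
  "on_edge qs y k \<longleftrightarrow> Suc k < length qs \<and> arc_len qs k \<le> y \<and> y \<le> arc_len qs (Suc k)
     \<and> dist (qs ! k) (qs ! Suc k) > 0"

definition edge_point :: "'a::euclidean_space list \<Rightarrow> nat \<Rightarrow> real \<Rightarrow> 'a" where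
  "edge_point qs k y =
     qs ! k + ((y - arc_len qs k) / dist (qs ! k) (qs ! Suc k)) *\<^sub>R (qs ! Suc k - qs ! k)"

definition edge_domain :: "'a::euclidean_space list \<Rightarrow> nat \<Rightarrow> real set" where
  "edge_domain qs k = {y. on_edge qs y k \<and> (\<forall>j<k. \<not> on_edge qs y j)}"

lemma point_at_eq:
  "point_at qs y =
     (if \<exists>k. on_edge qs y k then edge_point qs (LEAST k. on_edge qs y k) y else qs ! 0)"
  unfolding point_at_def on_edge_def edge_point_def Let_def ..

lemma Least_on_edge_in_edge_domain:
  "on_edge qs y k \<Longrightarrow> y \<in> edge_domain qs (LEAST k. on_edge qs y k)"
  unfolding edge_domain_def using LeastI not_less_Least by blast

lemma point_at_edge_domain:
  assumes "y \<in> edge_domain qs k"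
  shows "point_at qs y = edge_point qs k y"
proof -
  have "(LEAST k. on_edge qs y k) = k"
    by (rule Least_equality) (use assms not_less in \<open>auto simp: edge_domain_def\<close>)
  then show ?thesis using assms by (auto simp: point_at_eq edge_domain_def)
qed

lemma edge_domain_subset: "edge_domain qs k \<subseteq> {0..curve_len qs}"
proof
  fix y assume "y \<in> edge_domain qs k"
  then have "on_edge qs y k" by (simp add: edge_domain_def)
  moreover have "arc_len qs (Suc k) \<le> curve_len qs" if "Suc k < length qs"
    using that unfolding curve_len_def by (intro arc_len_mono) simp
  ultimately show "y \<in> {0..curve_len qs}"
    using arc_len_nonneg[of qs k] by (auto simp: on_edge_def)
qed

lemma is_interval_edge_domain: "is_interval (edge_domain qs k)"
  unfolding is_interval_1
proof (intro ballI allI impI)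
  fix a b y assume a: "a \<in> edge_domain qs k" and b: "b \<in> edge_domain qs k" and y: "a \<le> y \<and> y \<le> b"
  then have on_k: "on_edge qs y k" by (auto simp: edge_domain_def on_edge_def)
  have "\<not> on_edge qs y j" if "j < k" for j
  proof
    assume "on_edge qs y j"
    moreover have "arc_len qs (Suc j) \<le> arc_len qs k" using \<open>j < k\<close> by (simp add: arc_len_mono)
    ultimately have "y = a" using a y by (auto simp: edge_domain_def on_edge_def)
    with \<open>on_edge qs y j\<close> \<open>j < k\<close> a show False by (simp add: edge_domain_def)
  qed
  with on_k show "y \<in> edge_domain qs k" by (simp add: edge_domain_def)
qed

lemma on_edge_exists:
  assumes "0 \<le> y" "y \<le> arc_len qs n" "0 < arc_len qs n" "n < length qs"
  shows "\<exists>k. on_edge qs y k"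
  using assms
proof (induction n)
  case 0
  then show ?case by (simp add: arc_len_def)
next
  case (Suc n)
  show ?case
  proof (cases "y \<le> arc_len qs n \<and> 0 < arc_len qs n")
    case True
    with Suc show ?thesis by simp
  next
    case False
    then have "arc_len qs n \<le> y" and "arc_len qs n < arc_len qs (Suc n)"
      using Suc.prems arc_len_nonneg[of qs n] by auto
    with Suc.prems show ?thesis
      unfolding on_edge_def using arc_len_Suc[of qs n] by (intro exI[of _ n]) auto
  qed
qed

lemma off_edges_eq_0:
  assumes "y \<in> {0..curve_len qs}" and "\<nexists>k. on_edge qs y k"
  shows "y = 0"
proof (rule ccontr)
  assume "y \<noteq> 0"
  with assms(1) have "0 < curve_len qs" by simp
  then have "length qs - 1 < length qs" by (cases qs) (simp_all add: curve_len_def arc_len_def)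
  with assms \<open>0 < curve_len qs\<close> show False
    using on_edge_exists[of y qs "length qs - 1"] by (simp add: curve_len_def)
qed

definition far_set :: "'a::euclidean_space list \<Rightarrow> 'a \<Rightarrow> real \<Rightarrow> real set" where
  "far_set qs v \<rho> = {y \<in> {0..curve_len qs}. \<rho> < dist v (point_at qs y)}"

lemma far_set_eq:
  "far_set qs v \<rho> =
     {y \<in> {0..curve_len qs}. (\<nexists>k. on_edge qs y k) \<and> \<rho> < dist v (qs ! 0)} \<union>
     (\<Union>k<length qs - 1. edge_domain qs k - {y. edge_point qs k y \<in> cball v \<rho>})"
  (is "?Y = ?E \<union> ?U")
proof
  show "?Y \<subseteq> ?E \<union> ?U"
  proof
    fix y assume y: "y \<in> ?Y"
    show "y \<in> ?E \<union> ?U"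
    proof (cases "\<exists>k. on_edge qs y k")
      case True
      define k where "k = (LEAST k. on_edge qs y k)"
      have dom: "y \<in> edge_domain qs k"
        unfolding k_def using True Least_on_edge_in_edge_domain by blast
      then have "k < length qs - 1" by (auto simp: edge_domain_def on_edge_def)
      with y dom show ?thesis by (auto simp: point_at_edge_domain far_set_def)
    next
      case False
      with y show ?thesis by (simp add: point_at_eq far_set_def)
    qed
  qed
  show "?E \<union> ?U \<subseteq> ?Y"
  proof
    fix y assume "y \<in> ?E \<union> ?U"
    then show "y \<in> ?Y"
    proof
      assume "y \<in> ?E"
      then show ?thesis by (auto simp: point_at_eq far_set_def)
    next
      assume "y \<in> ?U"
      then obtain k where "y \<in> edge_domain qs k" "edge_point qs k y \<notin> cball v \<rho>" by blast
      then show ?thesis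
        using edge_domain_subset[of qs k] by (auto simp: point_at_edge_domain far_set_def)
    qed
  qed
qed

lemma far_set_interval_cover:
  fixes qs :: "'a::euclidean_space list"
  assumes "1 \<le> length qs"
  shows "\<exists>F. finite F \<and> card F \<le> 2 * length qs \<and> (\<forall>I\<in>F. is_interval I) \<and>
     \<Union>F = far_set qs v \<rho>"
proof -
  define E where "E = {y \<in> {0..curve_len qs}. (\<nexists>k. on_edge qs y k) \<and> \<rho> < dist v (qs ! 0)}"
  define N where "N k = {y. edge_point qs k y \<in> cball v \<rho>}" for k
  have "is_interval (N k)" for k
    unfolding N_def edge_point_def by (rule is_interval_affine_line_vimage) simp
  then have "\<forall>k. \<exists>I J. is_interval I \<and> is_interval J \<and> edge_domain qs k - N k = I \<union> J"
    using is_interval_Diff_split is_interval_edge_domain by blast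
  then obtain I J where IJ:
    "\<And>k. is_interval (I k) \<and> is_interval (J k) \<and> edge_domain qs k - N k = I k \<union> J k"
    by metis
  have "E \<subseteq> {0}" using off_edges_eq_0 by (auto simp: E_def)
  then have "is_interval E"
    by (metis subset_singleton_iff is_interval_empty is_interval_convex_1 convex_singleton)
  define F where "F = {E} \<union> (I ` {..<length qs - 1} \<union> J ` {..<length qs - 1})"
  have "card F \<le> 1 + ((length qs - 1) + (length qs - 1))"
    unfolding F_def
    by (intro card_Un_le[THEN order_trans] add_mono card_image_le[THEN order_trans]) auto
  moreover have "\<Union>F = far_set qs v \<rho>"
    unfolding far_set_eq F_def E_def[symmetric] N_def[symmetric] using IJ by auto
  ultimately show ?thesis
    using assms \<open>is_interval E\<close> IJ by (intro exI[of _ F]) (auto simp: F_def)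
qed

lemma obstacle_set_strip:
  assumes "0 \<le> a" and "b \<le> curve_len ps" and "\<forall>x\<in>{a..b}. h x = v"
  shows "obstacle_set ps h qs \<rho> \<inter> ({a..b} \<times> {0..curve_len qs}) =
     {a..b} \<times> far_set qs v \<rho>"
  using assms by (auto simp: obstacle_set_def BSD_def theta_def far_set_def)

lemma interval_rectangle_partition:
  fixes F :: "real set set"
  assumes "finite F" and "\<And>I. I \<in> F \<Longrightarrow> is_interval I"
  shows "\<exists>R. finite R \<and> card R \<le> card F \<and> pairwise disjnt R \<and>
     (\<forall>r\<in>R. \<exists>J. is_interval J \<and> J \<noteq> {} \<and> r = S \<times> J) \<and> \<Union>R = S \<times> \<Union>F"
proof (intro exI conjI)
  let ?C = "components (\<Union>F)"
  have fin: "finite ?C" and card: "card ?C \<le> card F"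
    using card_components_le_interval_cover[OF assms] by auto
  then show "finite ((\<lambda>J. S \<times> J) ` ?C)" by simp
  show "card ((\<lambda>J. S \<times> J) ` ?C) \<le> card F"
    using card_image_le[OF fin] card by (rule order_trans)
  show "pairwise disjnt ((\<lambda>J. S \<times> J) ` ?C)"
  proof (rule pairwise_imageI)
    fix c d assume "c \<in> ?C" "d \<in> ?C" "c \<noteq> d"
    then have "c \<inter> d = {}" using components_nonoverlap by blast
    then show "disjnt (S \<times> c) (S \<times> d)" by (simp add: disjnt_def Times_Int_Times)
  qed
  have "is_interval c \<and> c \<noteq> {}" if "c \<in> ?C" for c
    using that in_components_nonempty in_components_connected is_interval_connected_1 by blast
  then show "\<forall>r\<in>(\<lambda>J. S \<times> J) ` ?C. \<exists>J. is_interval J \<and> J \<noteq> {} \<and> r = S \<times> J"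
    by blast
  have "\<Union>((\<lambda>J. S \<times> J) ` ?C) = S \<times> \<Union>?C" by blast
  then show "\<Union>((\<lambda>J. S \<times> J) ` ?C) = S \<times> \<Union>F"
    by (simp only: Union_components)
qed

theorem mainTheorem5:
  "\<exists>C::nat. \<forall>(ps::'a::euclidean_space list) (qs::'a list) (\<rho>::real) (h::real \<Rightarrow> 'a) (i::nat).
     1 \<le> length qs \<and> 1 \<le> i \<and> i < length ps \<and>
     (\<exists>v\<in>set ps. \<forall>x\<in>{arc_len ps (i - 1)..arc_len ps i}. h x = v)
     \<longrightarrow> (\<exists>R. finite R \<and> card R \<le> C * length qs \<and> pairwise disjnt R \<and>
           (\<forall>r\<in>R. \<exists>J. is_interval J \<and> J \<noteq> {} \<and> r = {arc_len ps (i - 1)..arc_len ps i} \<times> J) \<and>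
           \<Union>R = obstacle_set ps h qs \<rho> \<inter> ({arc_len ps (i - 1)..arc_len ps i} \<times> {0..curve_len qs}))"
proof (intro exI[of _ 2] allI impI, elim conjE bexE)
  fix ps qs :: "'a list" and \<rho> :: real and h :: "real \<Rightarrow> 'a" and i :: nat and v :: 'a
  assume qs: "1 \<le> length qs" and i: "i < length ps"
    and hv: "\<forall>x\<in>{arc_len ps (i - 1)..arc_len ps i}. h x = v"
  let ?S = "{arc_len ps (i - 1)..arc_len ps i}"
  obtain F where F: "finite F" "card F \<le> 2 * length qs" "\<forall>I\<in>F. is_interval I"
    "\<Union>F = far_set qs v \<rho>"
    using far_set_interval_cover[OF qs] by blast
  obtain R where R: "finite R" "card R \<le> card F" "pairwise disjnt R"
    "\<forall>r\<in>R. \<exists>J. is_interval J \<and> J \<noteq> {} \<and> r = ?S \<times> J" "\<Union>R = ?S \<times> \<Union>F"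
    using interval_rectangle_partition[OF F(1) bspec[OF F(3)], where S = ?S] by blast
  have "arc_len ps i \<le> curve_len ps"
    using i unfolding curve_len_def by (intro arc_len_mono) simp
  then have strip: "obstacle_set ps h qs \<rho> \<inter> (?S \<times> {0..curve_len qs}) = ?S \<times> far_set qs v \<rho>"
    using hv arc_len_nonneg by (intro obstacle_set_strip)
  have "card R \<le> 2 * length qs" using R(2) F(2) by (rule order_trans)
  with R(1,3,4) R(5)[unfolded F(4), folded strip]
  show "\<exists>R. finite R \<and> card R \<le> 2 * length qs \<and> pairwise disjnt R \<and>
      (\<forall>r\<in>R. \<exists>J. is_interval J \<and> J \<noteq> {} \<and> r = ?S \<times> J) \<and>
      \<Union>R = obstacle_set ps h qs \<rho> \<inter> (?S \<times> {0..curve_len qs})"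
    by (intro exI[of _ R] conjI) assumption+
qed

end
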